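(* Let $s\in S(2^\infty)$ with $s^2=e$, $s\ne e$, and let $\mathrm{supp}(s)=\{x\in X: s(x)\neq x\}$. Then in $G=S(2^\infty)\ltimes \widetilde C(X;\mathbb{Z}_2)$, $$\mathrm{fpc}(s)=\{e,\ s,\ \widetilde f_{\mathrm{supp}(s)},\ s\widetilde f_{\mathrm{supp}(s)}\}.$$
   Context: For a group $G$ and $g\in G$, $C_G(g)$ is the centralizer of $g$ and $\mathrm{fpc}(g)=\{h\in G:\ \{t^{-1}ht: t\in C_G(g)\}\text{ is finite}\}$. For $n\ge1$ let $S(2^n)$ be the symmetric group of the finite set $\{0,1\}^n$, embedded in $S(2^{n+1})$ via $s\mapsto\tilde s$, $\tilde s(x,y)=(s(x),y)$ ($x\in\{0,1\}^n$, $y\in\{0,1\}$); $S(2^\infty)=\bigcup_n S(2^n)$. Let $X=\{0,1\}^{\mathbb N}$; $S(2^\infty)$ acts on $X$ by homeomorphisms via $s(x,y)=(s(x),y)$ for $s\in S(2^n)$, $x\in\{0,1\}^n$, $y\in\{0,1\}^{\mathbb N}$. $C(X;\mathbb Z_2)$ is the abelian group of continuous maps $X\to\mathbb Z_2$ under pointwise addition; its elements are $f_A=\mathbf 1_A$ for clopen $A\subseteq X$, with $f_Af_B=f_{A\triangle B}$. $S(2^\infty)$ acts by $g\cdot f_A=f_{g(A)}$. The constant functions $\{f_\emptyset,f_X\}$ form an invariant subgroup and $\widetilde C(X;\mathbb Z_2)$ is the quotient group; $\widetilde f_A$ denotes the class of $f_A$ (so $\widetilde f_A=\widetilde f_{X\setminus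 A}$). $G=S(2^\infty)\ltimes\widetilde C(X;\mathbb Z_2)$, with $g\widetilde f_Ag^{-1}=\widetilde f_{g(A)}$. *)

theory Defs
  imports "HOL-Analysis.Analysis" "HOL-Algebra.Group" "HOL-Combinatorics.Permutations"
begin

text \<open>The Cantor space X = {0,1}^N, with the product topology (bool carries the
discrete = order topology, nat => bool the product topology from Function_Topology).\<close>
type_synonym cantor = "nat \<Rightarrow> bool"

definition prefix_of :: "nat \<Rightarrow> cantor \<Rightarrow> bool list" where
  "prefix_of n x = map x [0..<n]"

definition lift_perm :: "nat \<Rightarrow> (bool list \<Rightarrow> bool list) \<Rightarrow> cantor \<Rightarrow> cantor" where
  "lift_perm n \<sigma> x = (\<lambda>i. if i < n then \<sigma> (prefix_of n x) ! i else x i)"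

text \<open>S(2^infinity), realised as the union over n of the images of S(2^n) acting on X
(the embeddings S(2^n) -> S(2^(n+1)) are compatible with the action on X, and the
action is faithful, so elements are identified with the maps of X they induce).\<close>
definition S2inf :: "(cantor \<Rightarrow> cantor) set" where
  "S2inf = {g. \<exists>n \<sigma>. \<sigma> permutes {xs. length xs = n} \<and> g = lift_perm n \<sigma>}"

definition clopen_set :: "cantor set \<Rightarrow> bool" where
  "clopen_set A \<longleftrightarrow> open A \<and> closed A"

text \<open>The class of f_A in C(X;Z_2) modulo constants: f_A ~ f_(X - A).\<close>
definition fcls :: "cantor set \<Rightarrow> cantor set set" where
  "fcls A = {A, - A}"

text \<open>G = S(2^inf) |x C~(X;Z_2). The pair (g, fcls A) stands for the element g * f~_A.
Product: (g f_A)(h f_B) = g h f_(h^-1 A) f_B = (g o h, class of (h^-1 A) symdiff B).\<close>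
definition Gsd :: "((cantor \<Rightarrow> cantor) \<times> cantor set set) monoid" where
  "Gsd = \<lparr> carrier = {(g, F). g \<in> S2inf \<and> (\<exists>A. clopen_set A \<and> F = fcls A)},
          mult = (\<lambda>(g, F) (h, K). (g \<circ> h,
                    {((h -` A) - B) \<union> (B - (h -` A)) | A B. A \<in> F \<and> B \<in> K})),
          one = (id, fcls {}) \<rparr>"

definition centralizer :: "('a, 'b) monoid_scheme \<Rightarrow> 'a \<Rightarrow> 'a set" where
  "centralizer G g = {t \<in> carrier G. t \<otimes>\<^bsub>G\<^esub> g = g \<otimes>\<^bsub>G\<^esub> t}"

definition fpc :: "('a, 'b) monoid_scheme \<Rightarrow> 'a \<Rightarrow> 'a set" where
  "fpc G g = {h \<in> carrier G.
     finite {inv\<^bsub>G\<^esub> t \<otimes>\<^bsub>G\<^esub> h \<otimes>\<^bsub>G\<^esub> t | t. t \<in> centralizer G g}}"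

definition supp :: "(cantor \<Rightarrow> cantor) \<Rightarrow> cantor set" where
  "supp s = {x. s x \<noteq> x}"

end

(*
  Let k f_B have finite orbit under the centralizer of s.  Conjugating by f_A, for a clopen
  s-invariant A, turns it into k f_C with C = k^-1(A) symmetric-difference B symmetric-difference A.
  If k moves some x to a point other than x and s x, the sets A can be taken to be small
  s-invariant cylinders near k x, away from x, and they produce infinitely many classes of C;
  hence k x is x or s x for every x, i.e. supp k is contained in supp s.

  Conjugating by g in S(2^infinity) commuting with s replaces B by g^-1(B) and supp k by
  g^-1(supp k).  A clopen set B other than {}, X, supp s and its complement contains a point x
  and misses a point y such that arbitrarily small cylinders around x and y can be exchanged,
  together with their images under s, by a permutation commuting with s.  Exchanging cylinders
  at ever deeper levels gives infinitely many distinct classes g^-1(B).  So B and supp k are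
  among these four sets, which leaves exactly the four listed elements; conversely, these are
  fixed by every element of the centralizer.
*)

theory Submission
  imports Defs "HOL-Library.Infinite_Set"
begin

section \<open>Cylinders in the Cantor space\<close>

definition cylinder :: "nat \<Rightarrow> cantor \<Rightarrow> cantor set" where
  "cylinder m x = {z. \<forall>i<m. z i = x i}"

definition flip_at :: "nat \<Rightarrow> cantor \<Rightarrow> cantor" where
  "flip_at c x = x(c := \<not> x c)"

lemma cylinder_refl [simp]: "x \<in> cylinder m x"
  by (simp add: cylinder_def)

lemma cylinder_sym: "z \<in> cylinder m x \<longleftrightarrow> x \<in> cylinder m z"
  by (auto simp: cylinder_def)

lemma cylinder_trans: "z \<in> cylinder m x \<Longrightarrow> x \<in> cylinder m y \<Longrightarrow> z \<in> cylinder m y"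
  by (auto simp: cylinder_def)

lemma cylinder_antimono: "m \<le> M \<Longrightarrow> cylinder M x \<subseteq> cylinder m x"
  by (auto simp: cylinder_def)

lemma disjoint_cylinders: "p \<notin> cylinder m x \<Longrightarrow> cylinder m x \<inter> cylinder m p = {}"
  by (auto simp: cylinder_def)

lemma flip_at_in_cylinder: "m \<le> c \<Longrightarrow> flip_at c x \<in> cylinder m x"
  by (auto simp: cylinder_def flip_at_def)

lemma cylinder_flip_at_subset: "m \<le> c \<Longrightarrow> m \<le> L \<Longrightarrow> cylinder L (flip_at c x) \<subseteq> cylinder m x"
  unfolding cylinder_def flip_at_def by force

lemma notin_cylinder_flip_at: "z c = x c \<Longrightarrow> z \<notin> cylinder (Suc c) (flip_at c x)"
  by (auto simp: cylinder_def flip_at_def)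

lemma flip_at_eq_iff [simp]: "flip_at c x = flip_at c y \<longleftrightarrow> x = y"
proof
  assume eq: "flip_at c x = flip_at c y"
  show "x = y"
  proof
    fix i
    show "x i = y i"
      using fun_cong[OF eq, of i] by (cases "i = c") (simp_all add: flip_at_def)
  qed
qed simp

lemma exists_cylinder_avoiding: "x \<noteq> y \<Longrightarrow> \<exists>m. \<forall>M\<ge>m. x \<notin> cylinder M y"
proof -
  assume "x \<noteq> y"
  then obtain i where "x i \<noteq> y i"
    by (auto simp: fun_eq_iff)
  then have "\<forall>M\<ge>Suc i. x \<notin> cylinder M y"
    unfolding cylinder_def using Suc_le_eq by blast
  then show ?thesis ..
qed

lemma length_prefix_of [simp]: "length (prefix_of n x) = n"
  by (simp add: prefix_of_def)

lemma nth_prefix_of [simp]: "i < n \<Longrightarrow> prefix_of n x ! i = x i"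
  by (simp add: prefix_of_def)

lemma prefix_of_eq_iff: "prefix_of n x = prefix_of n y \<longleftrightarrow> x \<in> cylinder n y"
  by (simp add: prefix_of_def cylinder_def atLeast0LessThan Ball_def)

definition extend_word :: "bool list \<Rightarrow> cantor" where
  "extend_word l i \<longleftrightarrow> i < length l \<and> l ! i"

lemma prefix_of_extend_word: "prefix_of (length l) (extend_word l) = l"
  by (rule nth_equalityI) (simp_all add: extend_word_def)

lemma extend_word_prefix_of_in_cylinder: "extend_word (prefix_of L w) \<in> cylinder L w"
  by (simp add: cylinder_def extend_word_def)

lemma eq_if_prefix_of_eq:
  assumes "prefix_of L x = prefix_of L y" and "\<And>i. L \<le> i \<Longrightarrow> x i = y i"
  shows "x = y"
proof
  fix i
  show "x i = y i"
  proof (cases "i < L")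
    case True
    then show ?thesis
      using arg_cong[OF assms(1), of "\<lambda>l. l ! i"] by simp
  qed (simp add: assms(2))
qed

lemma open_cylinder: "open (cylinder m x)"
proof -
  have "open {z. \<forall>i\<in>{..<m}. z (id i) \<in> {x i}}"
    by (rule product_topology_basis') (simp_all add: open_discrete)
  moreover have "cylinder m x = {z. \<forall>i\<in>{..<m}. z (id i) \<in> {x i}}"
    by (auto simp: cylinder_def)
  ultimately show ?thesis
    by simp
qed

lemma open_iff_cylinders: "open U \<longleftrightarrow> (\<forall>x\<in>U. \<exists>m. cylinder m x \<subseteq> U)"
proof
  assume "open U"
  then have U: "openin (product_topology (\<lambda>i. euclidean) UNIV) U"
    by (simp add: open_fun_def)
  show "\<forall>x\<in>U. \<exists>m. cylinder m x \<subseteq> U"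
  proof
    fix x assume "x \<in> U"
    from product_topology_open_contains_basis[OF U this] obtain X
      where X: "x \<in> (\<Pi>\<^sub>E i\<in>UNIV. X i)" "finite {i. X i \<noteq> UNIV}"
        "(\<Pi>\<^sub>E i\<in>UNIV. X i) \<subseteq> U"
      by auto
    obtain m where "{i. X i \<noteq> UNIV} \<subseteq> {..<m}"
      using X(2) finite_nat_bounded by blast
    have "cylinder m x \<subseteq> (\<Pi>\<^sub>E i\<in>UNIV. X i)"
    proof
      fix z assume z: "z \<in> cylinder m x"
      have "z i \<in> X i" for i
      proof (cases "X i = UNIV")
        case False
        with \<open>{i. X i \<noteq> UNIV} \<subseteq> {..<m}\<close> have "z i = x i"
          using z by (auto simp: cylinder_def)
        with X(1) show ?thesis
          by auto
      qed simp
      then show "z \<in> (\<Pi>\<^sub>E i\<in>UNIV. X i)"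
        by auto
    qed
    then show "\<exists>m. cylinder m x \<subseteq> U"
      using X(3) by blast
  qed
next
  assume cylinders: "\<forall>x\<in>U. \<exists>m. cylinder m x \<subseteq> U"
  have "\<exists>T. open T \<and> x \<in> T \<and> T \<subseteq> U" if "x \<in> U" for x
  proof -
    obtain m where "cylinder m x \<subseteq> U"
      using cylinders \<open>x \<in> U\<close> by blast
    then show ?thesis
      using open_cylinder[of m x] cylinder_refl[of x m] by blast
  qed
  then show "open U"
    by (rule iffD2[OF open_subopen, rule_format])
qed

lemma clopen_set_iff_cylinders:
  "clopen_set A \<longleftrightarrow> (\<forall>x. \<exists>m. cylinder m x \<subseteq> A \<or> cylinder m x \<subseteq> - A)"
proof -
  have "clopen_set A \<longleftrightarrow> open A \<and> open (- A)"
    by (simp add: clopen_set_def closed_def)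
  also have "\<dots> \<longleftrightarrow> (\<forall>x. \<exists>m. cylinder m x \<subseteq> A \<or> cylinder m x \<subseteq> - A)"
  proof -
    have "(\<exists>m. cylinder m x \<subseteq> A \<or> cylinder m x \<subseteq> - A) \<longleftrightarrow>
        (x \<in> A \<longrightarrow> (\<exists>m. cylinder m x \<subseteq> A)) \<and> (x \<in> - A \<longrightarrow> (\<exists>m. cylinder m x \<subseteq> - A))" for x
      using cylinder_refl[of x] by blast
    then show ?thesis
      unfolding open_iff_cylinders by blast
  qed
  finally show ?thesis .
qed

lemma clopen_set_cylinder_subset:
  assumes "clopen_set A" "x \<in> A"
  shows "\<exists>m. \<forall>M\<ge>m. cylinder M x \<subseteq> A"
proof -
  obtain m where "cylinder m x \<subseteq> A"
    using assms cylinder_refl unfolding clopen_set_iff_cylinders by blast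
  then show ?thesis
    using cylinder_antimono by blast
qed

lemma clopen_set_Compl: "clopen_set A \<Longrightarrow> clopen_set (- A)"
  by (simp add: clopen_set_def closed_def)

lemma clopen_set_Un: "clopen_set A \<Longrightarrow> clopen_set B \<Longrightarrow> clopen_set (A \<union> B)"
  by (simp add: clopen_set_def open_Un closed_Un)

lemma clopen_set_empty: "clopen_set {}"
  by (simp add: clopen_set_def)

lemma clopen_set_cylinder: "clopen_set (cylinder m a)"
  unfolding clopen_set_iff_cylinders
proof
  fix x
  have "cylinder m x \<subseteq> cylinder m a" if "x \<in> cylinder m a"
    using that cylinder_trans by blast
  moreover have "cylinder m x \<subseteq> - cylinder m a" if "x \<notin> cylinder m a"
    using that cylinder_sym cylinder_trans by blast
  ultimately show "\<exists>M. cylinder M x \<subseteq> cylinder m a \<or> cylinder M x \<subseteq> - cylinder m a"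
    by blast
qed

section \<open>The action of \<open>S(2\<^sup>\<infinity>)\<close> on the Cantor space\<close>

lemma lift_perm_apply_low: "i < n \<Longrightarrow> lift_perm n \<tau> x i = \<tau> (prefix_of n x) ! i"
  by (simp add: lift_perm_def)

lemma lift_perm_apply_high: "n \<le> i \<Longrightarrow> lift_perm n \<tau> x i = x i"
  by (simp add: lift_perm_def)

lemma length_permutes_words:
  assumes "\<tau> permutes {xs. length xs = n}"
  shows "length (\<tau> xs) = length xs"
proof (cases "length xs = n")
  case True
  then show ?thesis
    using permutes_in_image[OF assms, of xs] by simp
next
  case False
  then show ?thesis
    using permutes_not_in[OF assms, of xs] by simp
qed

lemma prefix_of_lift_perm:
  "\<tau> permutes {xs. length xs = n} \<Longrightarrow> prefix_of n (lift_perm n \<tau> x) = \<tau> (prefix_of n x)"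
  by (rule nth_equalityI) (auto simp: length_permutes_words lift_perm_apply_low)

lemma lift_perm_cylinder:
  "n \<le> L \<Longrightarrow> z \<in> cylinder L w \<Longrightarrow> lift_perm n \<tau> z \<in> cylinder L (lift_perm n \<tau> w)"
proof -
  assume "n \<le> L" "z \<in> cylinder L w"
  moreover from this have "prefix_of n z = prefix_of n w"
    using cylinder_antimono prefix_of_eq_iff by blast
  ultimately show ?thesis
    by (auto simp: cylinder_def lift_perm_def)
qed

lemma lift_perm_flip_at: "n \<le> c \<Longrightarrow> lift_perm n \<tau> (flip_at c z) = flip_at c (lift_perm n \<tau> z)"
proof -
  assume "n \<le> c"
  moreover from this have "prefix_of n (flip_at c z) = prefix_of n z"
    using flip_at_in_cylinder prefix_of_eq_iff by blast
  ultimately show ?thesis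
    by (auto simp: flip_at_def lift_perm_def fun_eq_iff)
qed

lemma lift_perm_fixed: "\<tau> (prefix_of n z) = prefix_of n z \<Longrightarrow> lift_perm n \<tau> z = z"
  by (auto simp: lift_perm_def fun_eq_iff)

lemma lift_perm_fixed_iff:
  "\<tau> permutes {xs. length xs = n} \<Longrightarrow> lift_perm n \<tau> z = z \<longleftrightarrow> \<tau> (prefix_of n z) = prefix_of n z"
  using lift_perm_fixed[of \<tau> n z] prefix_of_lift_perm[of \<tau> n z] by auto

lemma lift_perm_comp:
  assumes "\<tau> permutes {xs. length xs = n}" "\<rho> permutes {xs. length xs = n}"
  shows "lift_perm n \<tau> \<circ> lift_perm n \<rho> = lift_perm n (\<tau> \<circ> \<rho>)"
proof (intro ext)
  fix x i
  show "(lift_perm n \<tau> \<circ> lift_perm n \<rho>) x i = lift_perm n (\<tau> \<circ> \<rho>) x i"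
    by (cases "i < n")
      (simp_all add: lift_perm_apply_low lift_perm_apply_high prefix_of_lift_perm[OF assms(2)])
qed

lemma lift_perm_id: "lift_perm n id = id"
  by (auto simp: fun_eq_iff lift_perm_def)

lemma lift_perm_moved_notin_cylinder:
  "lift_perm n \<tau> z \<noteq> z \<Longrightarrow> n \<le> M \<Longrightarrow> lift_perm n \<tau> z \<notin> cylinder M z"
proof
  assume "n \<le> M" "lift_perm n \<tau> z \<in> cylinder M z"
  then have "lift_perm n \<tau> z i = z i" for i
    by (cases "i < n") (auto simp: cylinder_def lift_perm_apply_high)
  moreover assume "lift_perm n \<tau> z \<noteq> z"
  ultimately show False
    by auto
qed

lemma lift_perm_in_S2inf: "\<tau> permutes {xs. length xs = n} \<Longrightarrow> lift_perm n \<tau> \<in> S2inf"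
  unfolding S2inf_def by blast

lemma id_in_S2inf: "id \<in> S2inf"
  using lift_perm_in_S2inf[OF permutes_id] by (simp add: lift_perm_id)

text \<open>\<open>Hilbert_Choice.inv\<close> is written out because HOL-Algebra's syntax for group inverses
  captures plain \<open>inv\<close>.\<close>

lemma S2inf_inverse:
  assumes "g \<in> S2inf"
  shows "bij g" and "Hilbert_Choice.inv g \<in> S2inf"
proof -
  obtain n \<tau> where \<tau>: "\<tau> permutes {xs. length xs = n}" and g: "g = lift_perm n \<tau>"
    using assms unfolding S2inf_def by blast
  let ?h = "lift_perm n (Hilbert_Choice.inv \<tau>)"
  have gh: "g \<circ> ?h = id" and hg: "?h \<circ> g = id"
    using \<tau> permutes_inv[OF \<tau>] permutes_inv_o[OF \<tau>]
    by (simp_all add: g lift_perm_comp lift_perm_id)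
  show "bij g"
    by (rule o_bij[OF hg gh])
  have "Hilbert_Choice.inv g = ?h"
    by (rule inv_unique_comp[OF gh hg])
  then show "Hilbert_Choice.inv g \<in> S2inf"
    using lift_perm_in_S2inf[OF permutes_inv[OF \<tau>]] by simp
qed

lemma clopen_set_vimage_S2inf:
  assumes g: "g \<in> S2inf" and A: "clopen_set A"
  shows "clopen_set (g -` A)"
  unfolding clopen_set_iff_cylinders
proof
  fix x
  obtain n \<tau> where g_eq: "g = lift_perm n \<tau>"
    using g unfolding S2inf_def by blast
  obtain m where m: "cylinder m (g x) \<subseteq> A \<or> cylinder m (g x) \<subseteq> - A"
    using A unfolding clopen_set_iff_cylinders by blast
  have "g z \<in> cylinder m (g x)" if "z \<in> cylinder (max m n) x" for z
    using lift_perm_cylinder[OF _ that, of n \<tau>] cylinder_antimono[of m "max m n"]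
    by (auto simp: g_eq)
  then have "cylinder (max m n) x \<subseteq> g -` A \<or> cylinder (max m n) x \<subseteq> - (g -` A)"
    using m by blast
  then show "\<exists>M. cylinder M x \<subseteq> g -` A \<or> cylinder M x \<subseteq> - (g -` A)" ..
qed

lemma clopen_set_supp: "g \<in> S2inf \<Longrightarrow> clopen_set (supp g)"
  unfolding clopen_set_iff_cylinders
proof
  fix x
  assume "g \<in> S2inf"
  then obtain n \<tau> where \<tau>: "\<tau> permutes {xs. length xs = n}" and g: "g = lift_perm n \<tau>"
    unfolding S2inf_def by blast
  have "z \<in> supp g \<longleftrightarrow> x \<in> supp g" if "z \<in> cylinder n x" for z
  proof -
    have "prefix_of n z = prefix_of n x"
      using that prefix_of_eq_iff by blast
    then show ?thesis
      by (simp add: supp_def g lift_perm_fixed_iff[OF \<tau>])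
  qed
  then show "\<exists>m. cylinder m x \<subseteq> supp g \<or> cylinder m x \<subseteq> - supp g"
    by blast
qed

lemma supp_conj:
  assumes "bij g"
  shows "supp (Hilbert_Choice.inv g \<circ> k \<circ> g) = g -` supp k"
proof -
  have "Hilbert_Choice.inv g (k (g x)) = x \<longleftrightarrow> k (g x) = g x" for x
    using bij_inv_eq_iff[OF assms, of x "k (g x)"] by auto
  then show ?thesis
    by (auto simp: supp_def)
qed

section \<open>The group \<open>G\<close>\<close>

lemma fcls_Compl [simp]: "fcls (- A) = fcls A"
  by (simp add: fcls_def insert_commute)

lemma fcls_eq_iff: "fcls A = fcls B \<longleftrightarrow> A = B \<or> A = - B"
  by (auto simp: fcls_def doubleton_eq_iff)

lemma fcls_eq_fcls_empty_iff: "fcls A = fcls {} \<longleftrightarrow> A = {} \<or> A = UNIV"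
  by (auto simp: fcls_eq_iff)

lemma carrier_Gsd_iff: "(g, fcls A) \<in> carrier Gsd \<longleftrightarrow> g \<in> S2inf \<and> clopen_set A"
  by (auto simp: Gsd_def fcls_eq_iff clopen_set_Compl)

lemma carrier_GsdE:
  assumes "h \<in> carrier Gsd"
  obtains g A where "h = (g, fcls A)" "g \<in> S2inf" "clopen_set A"
  using assms by (auto simp: Gsd_def)

lemma one_Gsd: "\<one>\<^bsub>Gsd\<^esub> = (id, fcls {})"
  by (simp add: Gsd_def)

lemma mult_Gsd: "(g, fcls A) \<otimes>\<^bsub>Gsd\<^esub> (h, fcls B) = (g \<circ> h, fcls (sym_diff (h -` A) B))"
proof -
  have "{sym_diff (h -` A') B' | A' B'. A' \<in> fcls A \<and> B' \<in> fcls B} = fcls (sym_diff (h -` A) B)"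
    by (auto simp: fcls_def)
  then show ?thesis
    by (simp add: Gsd_def)
qed

lemma inv_Gsd:
  assumes g: "g \<in> S2inf" and A: "clopen_set A"
  shows "inv\<^bsub>Gsd\<^esub> (g, fcls A) = (Hilbert_Choice.inv g, fcls (Hilbert_Choice.inv g -` A))"
  unfolding m_inv_def
proof (rule the_equality)
  let ?g' = "Hilbert_Choice.inv g"
  have "bij g"
    using S2inf_inverse(1)[OF g] .
  then have gg': "g \<circ> ?g' = id" and g'g: "?g' \<circ> g = id"
    by (rule surj_iff[THEN iffD1, OF bij_is_surj], rule inv_o_cancel[OF bij_is_inj])
  have "g -` ?g' -` A = A"
    by (simp add: vimage_comp g'g)
  moreover have "(?g', fcls (?g' -` A)) \<in> carrier Gsd"
    using clopen_set_vimage_S2inf[OF S2inf_inverse(2)[OF g] A]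
    by (simp add: carrier_Gsd_iff S2inf_inverse(2)[OF g])
  ultimately show "(?g', fcls (?g' -` A)) \<in> carrier Gsd \<and>
      (g, fcls A) \<otimes>\<^bsub>Gsd\<^esub> (?g', fcls (?g' -` A)) = \<one>\<^bsub>Gsd\<^esub> \<and>
      (?g', fcls (?g' -` A)) \<otimes>\<^bsub>Gsd\<^esub> (g, fcls A) = \<one>\<^bsub>Gsd\<^esub>"
    by (simp add: mult_Gsd one_Gsd gg' g'g)
next
  fix y
  assume y: "y \<in> carrier Gsd \<and> (g, fcls A) \<otimes>\<^bsub>Gsd\<^esub> y = \<one>\<^bsub>Gsd\<^esub> \<and> y \<otimes>\<^bsub>Gsd\<^esub> (g, fcls A) = \<one>\<^bsub>Gsd\<^esub>"
  then obtain h C where y_eq: "y = (h, fcls C)"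
    by (auto elim: carrier_GsdE)
  with y have gh: "g \<circ> h = id" and "fcls (sym_diff (h -` A) C) = fcls {}"
    by (simp_all add: mult_Gsd one_Gsd)
  then have C: "C = h -` A \<or> C = - (h -` A)"
    by (auto simp: fcls_eq_fcls_empty_iff)
  have "h = (Hilbert_Choice.inv g \<circ> g) \<circ> h"
    using inv_o_cancel[OF bij_is_inj[OF S2inf_inverse(1)[OF g]]] by simp
  also have "\<dots> = Hilbert_Choice.inv g"
    by (simp add: comp_assoc gh)
  finally have "h = Hilbert_Choice.inv g" .
  with C show "y = (Hilbert_Choice.inv g, fcls (Hilbert_Choice.inv g -` A))"
    by (auto simp: y_eq fcls_eq_iff)
qed

lemma conj_Gsd:
  assumes "g \<in> S2inf" and "clopen_set A"
  shows "inv\<^bsub>Gsd\<^esub> (g, fcls A) \<otimes>\<^bsub>Gsd\<^esub> (k, fcls B) \<otimes>\<^bsub>Gsd\<^esub> (g, fcls A) =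
    (Hilbert_Choice.inv g \<circ> k \<circ> g,
     fcls (sym_diff (sym_diff ((Hilbert_Choice.inv g \<circ> k \<circ> g) -` A) (g -` B)) A))"
proof -
  have "g -` sym_diff (k -` Hilbert_Choice.inv g -` A) B =
      sym_diff ((Hilbert_Choice.inv g \<circ> k \<circ> g) -` A) (g -` B)"
    by auto
  then show ?thesis
    by (simp add: inv_Gsd[OF assms] mult_Gsd comp_assoc)
qed

lemma finite_conjugates_fpc:
  assumes "h \<in> fpc G x" and "T \<subseteq> centralizer G x"
  shows "finite ((\<lambda>t. inv\<^bsub>G\<^esub> t \<otimes>\<^bsub>G\<^esub> h \<otimes>\<^bsub>G\<^esub> t) ` T)"
proof (rule finite_subset)
  show "finite {inv\<^bsub>G\<^esub> t \<otimes>\<^bsub>G\<^esub> h \<otimes>\<^bsub>G\<^esub> t | t. t \<in> centralizer G x}"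
    using assms(1) by (simp add: fpc_def)
qed (use assms(2) in blast)

lemma fcls_sym_diff_twist:
  assumes "fcls (k -` A) = fcls A"
  shows "fcls (sym_diff (sym_diff (k -` A) B) A) = fcls B"
proof -
  have "k -` A = A \<or> k -` A = - A"
    using assms by (simp add: fcls_eq_iff)
  then show ?thesis
  proof
    assume "k -` A = A"
    then have "sym_diff (sym_diff (k -` A) B) A = B"
      by blast
    then show ?thesis
      by simp
  next
    assume "k -` A = - A"
    then have "sym_diff (sym_diff (k -` A) B) A = - B"
      by blast
    then show ?thesis
      by simp
  qed
qed

lemma fpc_Gsd_carrier: "(k, fcls B) \<in> fpc Gsd x \<Longrightarrow> k \<in> S2inf \<and> clopen_set B"
  by (simp add: fpc_def carrier_Gsd_iff)

lemma infinite_fcls_family: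
  assumes "\<And>i j. i \<noteq> j \<Longrightarrow> (u i \<in> E i) \<noteq> (u i \<in> E j)"
    and "\<And>i j. (v \<in> E i) = (v \<in> E j)"
    and "\<And>j :: nat. fcls (E j) \<in> S"
  shows "infinite S"
proof -
  have "inj (\<lambda>j. fcls (E j))"
  proof (rule injI)
    fix i j
    assume "fcls (E i) = fcls (E j)"
    then have "E i = E j \<or> E i = - E j"
      by (simp add: fcls_eq_iff)
    moreover have "E i \<noteq> - E j"
      using assms(2)[of i j] by auto
    ultimately show "i = j"
      using assms(1)[of i j] by auto
  qed
  then have "infinite (range (\<lambda>j. fcls (E j)))"
    by (rule range_inj_infinite)
  moreover have "range (\<lambda>j. fcls (E j)) \<subseteq> S"
    using assms(3) by blast
  ultimately show ?thesis
    by (rule infinite_super[rotated])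
qed

section \<open>Involutions and commuting transpositions\<close>

text \<open>The configurations of \<open>x \<in> B\<close>, \<open>y \<notin> B\<close> in which small neighbourhoods of \<open>x\<close> and \<open>y\<close>
  can be swapped by a permutation commuting with the involution \<open>f\<close>.\<close>

definition separating_pair :: "('a \<Rightarrow> 'a) \<Rightarrow> 'a set \<Rightarrow> 'a \<Rightarrow> 'a \<Rightarrow> bool" where
  "separating_pair f B x y \<longleftrightarrow> x \<in> B \<and> y \<notin> B \<and>
    ((f x = x \<and> f y = y) \<or> y = f x \<or> (f x \<noteq> x \<and> f y \<noteq> y \<and> f y \<notin> B))"

lemma no_separating_pair_saturated:
  assumes f: "f \<circ> f = id" and none: "\<nexists>x y. separating_pair f B x y" and x: "x \<in> B"
  shows "f x = x \<Longrightarrow> {z. f z = z} \<subseteq> B" and "f x \<noteq> x \<Longrightarrow> {z. f z \<noteq> z} \<subseteq> B"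
proof -
  have moved_closed: "f z \<in> B" if "z \<in> B" "f z \<noteq> z" for z
    using none that by (auto simp: separating_pair_def)
  show "{z. f z = z} \<subseteq> B" if "f x = x"
    using none x that by (auto simp: separating_pair_def)
  show "{z. f z \<noteq> z} \<subseteq> B" if "f x \<noteq> x"
  proof
    fix y
    assume y: "y \<in> {z. f z \<noteq> z}"
    show "y \<in> B"
    proof (rule ccontr)
      assume "y \<notin> B"
      moreover have "f y \<notin> B"
        using moved_closed[of "f y"] \<open>y \<notin> B\<close> y fun_cong[OF f, of y] by auto
      ultimately show False
        using none x that y by (auto simp: separating_pair_def)
    qed
  qed
qed

lemma exists_separating_pair:
  assumes f: "f \<circ> f = id" and B: "B \<notin> {{}, UNIV, {x. f x \<noteq> x}, {x. f x = x}}"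
  shows "\<exists>x y. separating_pair f B x y"
proof (rule ccontr)
  assume none: "\<nexists>x y. separating_pair f B x y"
  note saturated = no_separating_pair_saturated[OF f none]
  consider "B \<inter> {x. f x = x} \<noteq> {}" "B \<inter> {x. f x \<noteq> x} \<noteq> {}"
    | "B \<inter> {x. f x = x} \<noteq> {}" "B \<inter> {x. f x \<noteq> x} = {}"
    | "B \<inter> {x. f x = x} = {}" "B \<inter> {x. f x \<noteq> x} \<noteq> {}"
    | "B \<inter> {x. f x = x} = {}" "B \<inter> {x. f x \<noteq> x} = {}"
    by blast
  then show False
  proof cases
    case 1
    then have "B = UNIV"
      using saturated by blast
    with B show False
      by simp
  next
    case 2
    then have "B = {x. f x = x}"
      using saturated by blast
    with B show False
      by simp
  next
    case 3
    then have "B = {x. f x \<noteq> x}"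
      using saturated by blast
    with B show False
      by simp
  next
    case 4
    then have "B = {}"
      by blast
    with B show False
      by simp
  qed
qed

lemma transpose_comp_disjoint_commute:
  "{a, b} \<inter> {c, d} = {} \<Longrightarrow>
    Transposition.transpose a b \<circ> Transposition.transpose c d =
    Transposition.transpose c d \<circ> Transposition.transpose a b"
  by (auto simp: fun_eq_iff Transposition.transpose_def)

lemma transpose_comp_involution:
  assumes "f \<circ> f = id"
  shows "Transposition.transpose a b \<circ> f = f \<circ> Transposition.transpose (f a) (f b)"
proof -
  have "bij f" and "Hilbert_Choice.inv f = f"
    using assms o_bij inv_unique_comp by blast+
  then show ?thesis
    using transpose_comp_eq by metis
qed

lemma commuting_permutation_of_pair:
  assumes f: "f \<circ> f = id"
    and ab: "(f a = a \<and> f b = b) \<or> f a = b \<or> {a, b} \<inter> {f a, f b} = {}"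
  shows "\<exists>\<tau>. \<tau> permutes {a, b, f a, f b} \<and> \<tau> \<circ> f = f \<circ> \<tau> \<and> \<tau> a = b"
proof -
  have ff: "f (f x) = x" for x
    using f by (simp add: fun_eq_iff)
  have transpose_perm: "Transposition.transpose a b permutes {a, b, f a, f b}"
    by (simp add: permutes_swap_id)
  consider "f a = a \<and> f b = b" | "f a = b" | "{a, b} \<inter> {f a, f b} = {}"
    using ab by blast
  then show ?thesis
  proof cases
    case 1
    then show ?thesis
      using transpose_perm transpose_comp_involution[OF f, of a b] by auto
  next
    case 2
    then have "f b = a"
      using ff by metis
    then show ?thesis
      using transpose_perm transpose_comp_involution[OF f, of a b] 2
      by (auto simp: transpose_commute)
  next
    case 3
    let ?\<tau> = "Transposition.transpose a b \<circ> Transposition.transpose (f a) (f b)"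
    have "?\<tau> \<circ> f = Transposition.transpose a b \<circ> (f \<circ> Transposition.transpose a b)"
      using transpose_comp_involution[OF f, of "f a" "f b"] by (simp add: comp_assoc ff)
    also have "\<dots> = f \<circ> (Transposition.transpose (f a) (f b) \<circ> Transposition.transpose a b)"
      using transpose_comp_involution[OF f, of a b] by (metis comp_assoc)
    also have "\<dots> = f \<circ> ?\<tau>"
      using transpose_comp_disjoint_commute[OF 3] by simp
    finally have "?\<tau> \<circ> f = f \<circ> ?\<tau>" .
    moreover have "?\<tau> permutes {a, b, f a, f b}"
      by (intro permutes_compose permutes_swap_id) auto
    moreover have "?\<tau> a = b"
      using 3 by auto
    ultimately show ?thesis
      by blast
  qed
qed

section \<open>Elements of \<open>S(2\<^sup>\<infinity>)\<close> commuting with an involution \<open>s\<close>\<close>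

locale S2inf_involution =
  fixes s :: "cantor \<Rightarrow> cantor" and n :: nat and \<sigma> :: "bool list \<Rightarrow> bool list"
  assumes s_eq: "s = lift_perm n \<sigma>"
    and permutes_words: "\<sigma> permutes {xs. length xs = n}"
    and involution: "s \<circ> s = id"
begin

lemma s_s [simp]: "s (s z) = z"
  using fun_cong[OF involution] by simp

lemma s_in_S2inf: "s \<in> S2inf"
  by (simp add: s_eq lift_perm_in_S2inf[OF permutes_words])

lemma s_flip_at: "n \<le> c \<Longrightarrow> s (flip_at c z) = flip_at c (s z)"
  by (simp add: s_eq lift_perm_flip_at)

lemma s_cylinder: "n \<le> L \<Longrightarrow> z \<in> cylinder L w \<Longrightarrow> s z \<in> cylinder L (s w)"
  unfolding s_eq by (rule lift_perm_cylinder)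

lemma s_mem_cylinder_iff: "n \<le> L \<Longrightarrow> s z \<in> cylinder L w \<longleftrightarrow> z \<in> cylinder L (s w)"
  using s_cylinder[of L z "s w"] s_cylinder[of L "s z" w] by auto

lemma s_moved_notin_cylinder: "s z \<noteq> z \<Longrightarrow> n \<le> M \<Longrightarrow> s z \<notin> cylinder M z"
  by (simp add: s_eq lift_perm_moved_notin_cylinder)

text \<open>The action of \<open>s\<close> on the \<open>L\<close>-cylinders, i.e.\ on words of length \<open>L\<close>, extended by the
  identity to all other words so that it is an involution of all lists (for \<open>L \<ge> n\<close>).\<close>

definition s_word :: "nat \<Rightarrow> bool list \<Rightarrow> bool list" where
  "s_word L l = (if length l = L then prefix_of L (s (extend_word l)) else l)"

lemma prefix_of_s: "n \<le> L \<Longrightarrow> prefix_of L (s z) = s_word L (prefix_of L z)"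
proof -
  assume L: "n \<le> L"
  have "s (extend_word (prefix_of L z)) \<in> cylinder L (s z)"
    using s_cylinder[OF L extend_word_prefix_of_in_cylinder] .
  then have "s z \<in> cylinder L (s (extend_word (prefix_of L z)))"
    using cylinder_sym by blast
  then show ?thesis
    by (simp add: s_word_def prefix_of_eq_iff)
qed

lemma s_word_involution:
  assumes L: "n \<le> L"
  shows "s_word L \<circ> s_word L = id"
proof
  fix l
  show "(s_word L \<circ> s_word L) l = id l"
  proof (cases "length l = L")
    case True
    then have "s_word L (s_word L l) = s_word L (prefix_of L (s (extend_word l)))"
      by (simp add: s_word_def)
    also have "\<dots> = prefix_of L (s (s (extend_word l)))"
      by (rule prefix_of_s[OF L, symmetric])
    also have "\<dots> = l"
      using prefix_of_extend_word[of l] True by simp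
    finally show ?thesis
      by simp
  qed (simp add: s_word_def)
qed

lemma lift_perm_commute_s:
  assumes L: "n \<le> L" and \<tau>: "\<tau> permutes {xs. length xs = L}"
    and commute: "\<tau> \<circ> s_word L = s_word L \<circ> \<tau>"
  shows "lift_perm L \<tau> \<circ> s = s \<circ> lift_perm L \<tau>"
proof
  fix z
  let ?g = "lift_perm L \<tau>"
  have "prefix_of L (?g (s z)) = prefix_of L (s (?g z))"
    using fun_cong[OF commute] by (simp add: prefix_of_lift_perm[OF \<tau>] prefix_of_s[OF L])
  moreover have "?g (s z) i = s (?g z) i" if "L \<le> i" for i
    using that L by (simp add: lift_perm_apply_high s_eq)
  ultimately show "(?g \<circ> s) z = (s \<circ> ?g) z"
    unfolding comp_apply by (rule eq_if_prefix_of_eq)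
qed

lemma commuting_swap_words:
  assumes L: "n \<le> L" and a: "length a = L" and b: "length b = L"
    and ab: "(s_word L a = a \<and> s_word L b = b) \<or> s_word L a = b \<or>
      {a, b} \<inter> {s_word L a, s_word L b} = {}"
  obtains \<tau> where "\<tau> permutes {xs. length xs = L}" and "lift_perm L \<tau> \<circ> s = s \<circ> lift_perm L \<tau>"
    and "\<tau> a = b" and "\<And>l. l \<notin> {a, b, s_word L a, s_word L b} \<Longrightarrow> \<tau> l = l"
proof -
  obtain \<tau> where \<tau>: "\<tau> permutes {a, b, s_word L a, s_word L b}"
    "\<tau> \<circ> s_word L = s_word L \<circ> \<tau>" "\<tau> a = b"
    using commuting_permutation_of_pair[OF s_word_involution[OF L] ab] by blast
  have "length (s_word L l) = length l" for l
    by (simp add: s_word_def)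
  then have \<tau>_words: "\<tau> permutes {xs. length xs = L}"
    using a b by (intro permutes_subset[OF \<tau>(1)]) auto
  show thesis
  proof
    show "lift_perm L \<tau> \<circ> s = s \<circ> lift_perm L \<tau>"
      by (rule lift_perm_commute_s[OF L \<tau>_words \<tau>(2)])
    show "\<tau> l = l" if "l \<notin> {a, b, s_word L a, s_word L b}" for l
      by (rule permutes_not_in[OF \<tau>(1) that])
  qed (fact \<tau>_words \<tau>(3))+
qed

text \<open>The configurations in which the \<open>L\<close>-cylinders of \<open>u\<close> and \<open>v\<close> can be exchanged by a
  permutation commuting with \<open>s\<close>. In the third one \<open>s u \<notin> cylinder L v\<close> is not listed
  because it is equivalent to \<open>s v \<notin> cylinder L u\<close>.\<close>

definition swappable :: "nat \<Rightarrow> cantor \<Rightarrow> cantor \<Rightarrow> bool" where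
  "swappable L u v \<longleftrightarrow> (s u = u \<and> s v = v) \<or> v = s u \<or>
    (s u \<notin> cylinder L u \<and> s v \<notin> cylinder L v \<and> s v \<notin> cylinder L u)"

lemma commuting_swap:
  assumes L: "n \<le> L" and uv: "swappable L u v"
  obtains g where "g \<in> S2inf" and "g \<circ> s = s \<circ> g" and "g u \<in> cylinder L v"
    and "\<And>z. z \<notin> cylinder L u \<union> cylinder L v \<union> cylinder L (s u) \<union> cylinder L (s v) \<Longrightarrow> g z = z"
proof -
  let ?w = "prefix_of L"
  have words: "?w (s z) = s_word L (?w z)" "?w z = ?w z' \<longleftrightarrow> z \<in> cylinder L z'" for z z'
    using prefix_of_s[OF L] prefix_of_eq_iff by auto
  have "(?w (s u) = ?w u \<and> ?w (s v) = ?w v) \<or> ?w (s u) = ?w v \<or>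
      {?w u, ?w v} \<inter> {?w (s u), ?w (s v)} = {}"
  proof -
    consider "s u = u \<and> s v = v" | "v = s u"
      | "s u \<notin> cylinder L u" "s v \<notin> cylinder L v" "s v \<notin> cylinder L u"
      using uv by (auto simp: swappable_def)
    then show ?thesis
    proof cases
      case 3
      moreover have "s u \<notin> cylinder L v"
        using 3 s_mem_cylinder_iff[OF L] cylinder_sym by auto
      ultimately have "?w (s u) \<noteq> ?w u" "?w (s v) \<noteq> ?w u" "?w (s u) \<noteq> ?w v" "?w (s v) \<noteq> ?w v"
        by (simp_all only: words(2) not_False_eq_True)
      then show ?thesis
        by auto
    qed auto
  qed
  then obtain \<tau> where \<tau>: "\<tau> permutes {xs. length xs = L}" "lift_perm L \<tau> \<circ> s = s \<circ> lift_perm L \<tau>"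
    "\<tau> (?w u) = ?w v" "\<And>l. l \<notin> {?w u, ?w v, ?w (s u), ?w (s v)} \<Longrightarrow> \<tau> l = l"
    using commuting_swap_words[OF L length_prefix_of length_prefix_of] unfolding words(1) by blast
  show thesis
  proof
    show "lift_perm L \<tau> \<in> S2inf"
      by (rule lift_perm_in_S2inf[OF \<tau>(1)])
    show "lift_perm L \<tau> u \<in> cylinder L v"
      using \<tau>(3) by (simp add: prefix_of_lift_perm[OF \<tau>(1)] words(2)[symmetric])
  next
    fix z
    assume "z \<notin> cylinder L u \<union> cylinder L v \<union> cylinder L (s u) \<union> cylinder L (s v)"
    then have "?w z \<notin> {?w u, ?w v, ?w (s u), ?w (s v)}"
      by (simp add: words(2))
    then show "lift_perm L \<tau> z = z"
      by (intro lift_perm_fixed \<tau>(4))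
  qed (rule \<tau>(2))
qed

lemma swappable_flip_at:
  assumes M: "n \<le> M" and x: "cylinder M x \<subseteq> B" and xy: "separating_pair s B x y"
  shows "swappable (Suc (M + j)) (flip_at (M + j) x) (flip_at (M + j) y)"
proof -
  define L where "L = Suc (M + j)"
  let ?u = "flip_at (M + j) x" and ?v = "flip_at (M + j) y"
  have L: "n \<le> L"
    using M by (simp add: L_def)
  have su: "s ?u = flip_at (M + j) (s x)" and sv: "s ?v = flip_at (M + j) (s y)"
    using M by (simp_all add: s_flip_at)
  consider "s x = x" "s y = y" | "y = s x" | "s x \<noteq> x" "s y \<noteq> y" "s y \<notin> B"
    using xy by (auto simp: separating_pair_def)
  then show ?thesis
  proof cases
    case 3
    then have "s ?u \<noteq> ?u" "s ?v \<noteq> ?v"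
      using su sv by simp_all
    then have "s ?u \<notin> cylinder L ?u" "s ?v \<notin> cylinder L ?v"
      using s_moved_notin_cylinder[OF _ L] by blast+
    moreover have "s ?v \<notin> cylinder L ?u"
    proof
      assume "s ?v \<in> cylinder L ?u"
      then have "s ?v \<in> cylinder M x"
        using cylinder_flip_at_subset[of M "M + j" L x] by (auto simp: L_def)
      moreover have "s ?v \<in> cylinder M (s y)"
        using sv flip_at_in_cylinder[of M "M + j"] by simp
      moreover have "s y \<notin> cylinder M x"
        using x \<open>s y \<notin> B\<close> by blast
      ultimately show False
        using disjoint_cylinders by blast
    qed
    ultimately show ?thesis
      by (simp add: swappable_def L_def)
  qed (simp_all add: swappable_def su sv)
qed

lemma separating_pair_flip_cylinders:
  assumes M: "n \<le> M" and x: "cylinder M x \<subseteq> B" and y: "cylinder M y \<subseteq> - B"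
    and xy: "separating_pair s B x y"
    and w: "w \<in> {flip_at (M + j) x, flip_at (M + j) y,
      s (flip_at (M + j) x), s (flip_at (M + j) y)}"
  shows "w = flip_at (M + j) x \<or> (\<exists>p. p \<notin> cylinder M x \<and> cylinder (Suc (M + j)) w \<subseteq> cylinder M p)"
proof -
  let ?u = "flip_at (M + j) x" and ?v = "flip_at (M + j) y"
  have near: "cylinder (Suc (M + j)) (flip_at (M + j) p) \<subseteq> cylinder M p" for p
    by (rule cylinder_flip_at_subset) simp_all
  have su: "s ?u = flip_at (M + j) (s x)" and sv: "s ?v = flip_at (M + j) (s y)"
    using M by (simp_all add: s_flip_at)
  have y_far: "y \<notin> cylinder M x"
    using x y cylinder_refl[of y M] by blast
  consider "s x = x" "s y = y" | "y = s x" | "s x \<noteq> x" "s y \<notin> B"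
    using xy by (auto simp: separating_pair_def)
  then have "w = ?u \<or> w = ?v \<or> (\<exists>p. p \<notin> cylinder M x \<and> cylinder (Suc (M + j)) w \<subseteq> cylinder M p)"
  proof cases
    case 3
    then have "s x \<notin> cylinder M x" "s y \<notin> cylinder M x"
      using x s_moved_notin_cylinder[OF _ M] by auto
    moreover have "cylinder (Suc (M + j)) (s ?u) \<subseteq> cylinder M (s x)"
      "cylinder (Suc (M + j)) (s ?v) \<subseteq> cylinder M (s y)"
      using su sv near by simp_all
    ultimately show ?thesis
      using w by blast
  qed (use w su sv in auto)
  then show ?thesis
    using y_far near by blast
qed

lemma swap_near_pair:
  assumes M: "n \<le> M" and x: "cylinder M x \<subseteq> B" and y: "cylinder M y \<subseteq> - B"
    and xy: "separating_pair s B x y"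
  obtains g where "g \<in> S2inf" and "g \<circ> s = s \<circ> g" and "g (flip_at (M + j) x) \<notin> B"
    and "\<And>z. z \<in> cylinder M x \<Longrightarrow> z (M + j) = x (M + j) \<Longrightarrow> g z = z"
proof -
  define L where "L = Suc (M + j)"
  let ?u = "flip_at (M + j) x" and ?v = "flip_at (M + j) y"
  have L: "n \<le> L"
    using M by (simp add: L_def)
  obtain g where g: "g \<in> S2inf" "g \<circ> s = s \<circ> g" "g ?u \<in> cylinder L ?v"
    and g_fixes: "\<And>z. z \<notin> cylinder L ?u \<union> cylinder L ?v \<union> cylinder L (s ?u) \<union> cylinder L (s ?v) \<Longrightarrow>
      g z = z"
    using commuting_swap[OF L swappable_flip_at[OF M x xy, of j, folded L_def]] by blast
  show thesis
  proof
    show "g ?u \<notin> B"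
      using g(3) cylinder_flip_at_subset[of M "M + j" L y] y by (auto simp: L_def)
  next
    fix z
    assume z: "z \<in> cylinder M x" "z (M + j) = x (M + j)"
    have "z \<notin> cylinder L w" if "w \<in> {?u, ?v, s ?u, s ?v}" for w
      using separating_pair_flip_cylinders[OF M x y xy that] notin_cylinder_flip_at[of z "M + j" x]
        z disjoint_cylinders unfolding L_def by blast
    then show "g z = z"
      by (intro g_fixes) blast
  qed (use g in auto)
qed

lemma infinite_vimage_classes:
  assumes B: "clopen_set B" "B \<notin> {{}, UNIV, supp s, - supp s}"
  shows "infinite {fcls (g -` B) | g. g \<in> S2inf \<and> g \<circ> s = s \<circ> g}"
proof -
  have "B \<notin> {{}, UNIV, {x. s x \<noteq> x}, {x. s x = x}}"
    using B(2) by (simp add: supp_def Collect_neg_eq[symmetric])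
  then obtain x y where xy: "separating_pair s B x y"
    using exists_separating_pair[OF involution] by blast
  then have x: "x \<in> B" and y: "y \<notin> B"
    by (simp_all add: separating_pair_def)
  obtain m1 where m1: "\<forall>M\<ge>m1. cylinder M x \<subseteq> B"
    using clopen_set_cylinder_subset[OF B(1) x] by blast
  obtain m2 where m2: "\<forall>M\<ge>m2. cylinder M y \<subseteq> - B"
    using clopen_set_cylinder_subset[OF clopen_set_Compl[OF B(1)]] y by blast
  define M where "M = max n (max m1 m2)"
  have M: "n \<le> M" "cylinder M x \<subseteq> B" "cylinder M y \<subseteq> - B"
    using m1 m2 by (simp_all add: M_def)
  have "\<forall>j. \<exists>g. g \<in> S2inf \<and> g \<circ> s = s \<circ> g \<and> g (flip_at (M + j) x) \<notin> B \<and>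
      (\<forall>z\<in>cylinder M x. z (M + j) = x (M + j) \<longrightarrow> g z = z)"
    using swap_near_pair[OF M xy] by metis
  then obtain g where g: "\<And>j. g j \<in> S2inf" "\<And>j. g j \<circ> s = s \<circ> g j"
    "\<And>j. g j (flip_at (M + j) x) \<notin> B"
    "\<And>j z. z \<in> cylinder M x \<Longrightarrow> z (M + j) = x (M + j) \<Longrightarrow> g j z = z"
    by metis
  show ?thesis
  proof (rule infinite_fcls_family[where E = "\<lambda>j. g j -` B"])
    fix i j :: nat
    assume "i \<noteq> j"
    have "flip_at (M + i) x \<in> cylinder M x"
      by (rule flip_at_in_cylinder) simp
    moreover have "flip_at (M + i) x (M + j) = x (M + j)"
      using \<open>i \<noteq> j\<close> by (simp add: flip_at_def)
    ultimately have "g j (flip_at (M + i) x) \<in> B"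
      using g(4) M(2) by auto
    then show "(flip_at (M + i) x \<in> g i -` B) \<noteq> (flip_at (M + i) x \<in> g j -` B)"
      using g(3) by auto
  next
    fix i j :: nat
    show "(x \<in> g i -` B) = (x \<in> g j -` B)"
      using g(4)[of x] by simp
  next
    fix j
    show "fcls (g j -` B) \<in> {fcls (g -` B) | g. g \<in> S2inf \<and> g \<circ> s = s \<circ> g}"
      using g by blast
  qed
qed

definition s_saturated_cylinder :: "nat \<Rightarrow> cantor \<Rightarrow> cantor set" where
  "s_saturated_cylinder L w = cylinder L w \<union> cylinder L (s w)"

lemma clopen_set_s_saturated_cylinder: "clopen_set (s_saturated_cylinder L w)"
  by (simp add: s_saturated_cylinder_def clopen_set_Un clopen_set_cylinder)

lemma vimage_s_saturated_cylinder:
  "n \<le> L \<Longrightarrow> s -` s_saturated_cylinder L w = s_saturated_cylinder L w"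
  using s_mem_cylinder_iff[of L] by (auto simp: s_saturated_cylinder_def)

lemma s_saturated_cylinder_flip_at_subset:
  "n \<le> M \<Longrightarrow> s_saturated_cylinder (Suc (M + j)) (flip_at (M + j) w) \<subseteq> cylinder M w \<union> cylinder M (s w)"
  using cylinder_flip_at_subset[of M "M + j" "Suc (M + j)"]
  by (auto simp: s_saturated_cylinder_def s_flip_at)

lemma notin_s_saturated_cylinder_flip_at:
  assumes M: "n \<le> M" and z: "z \<in> cylinder M w" "z (M + j) = w (M + j)"
  shows "z \<notin> s_saturated_cylinder (Suc (M + j)) (flip_at (M + j) w)"
proof -
  have "z \<notin> cylinder (Suc (M + j)) (flip_at (M + j) w)"
    using notin_cylinder_flip_at[of z "M + j" w] z(2) by simp
  moreover have "z \<notin> cylinder (Suc (M + j)) (s (flip_at (M + j) w))"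
  proof (cases "s w = w")
    case True
    with calculation show ?thesis
      using M by (simp add: s_flip_at)
  next
    case False
    then have "z \<notin> cylinder M (s w)"
      using z(1) s_moved_notin_cylinder[OF _ M] disjoint_cylinders by blast
    then show ?thesis
      using cylinder_flip_at_subset[of M "M + j" "Suc (M + j)" "s w"] M by (auto simp: s_flip_at)
  qed
  ultimately show ?thesis
    by (simp add: s_saturated_cylinder_def)
qed

lemma infinite_twisted_classes:
  assumes k: "k \<in> S2inf" and kx: "k x \<noteq> x" "k x \<noteq> s x"
  shows "infinite {fcls (sym_diff (sym_diff (k -` A) B) A) | A. clopen_set A \<and> s -` A = A}"
proof -
  obtain m \<kappa> where k_eq: "k = lift_perm m \<kappa>"
    using k unfolding S2inf_def by blast
  define w where "w = k x"
  have "x \<noteq> s w"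
  proof
    assume "x = s w"
    then have "s x = k x"
      unfolding w_def by (metis s_s)
    with kx show False
      by simp
  qed
  moreover have "x \<noteq> w"
    using kx by (simp add: w_def)
  ultimately obtain m1 m2 where m1: "\<forall>M\<ge>m1. x \<notin> cylinder M w" and m2: "\<forall>M\<ge>m2. x \<notin> cylinder M (s w)"
    using exists_cylinder_avoiding by metis
  define M where "M = max (max n m) (max m1 m2)"
  have M: "n \<le> M" "m \<le> M" "x \<notin> cylinder M w" "x \<notin> cylinder M (s w)"
    using m1 m2 by (simp_all add: M_def)
  define A where "A j = s_saturated_cylinder (Suc (M + j)) (flip_at (M + j) w)" for j
  have x_out: "z \<notin> A j" if "z \<in> cylinder M x" for z j
    using that s_saturated_cylinder_flip_at_subset[OF M(1)] M(3,4) disjoint_cylinders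
    unfolding A_def by blast
  have w_out: "z \<notin> A j" if "z \<in> cylinder M w" "z (M + j) = w (M + j)" for z j
    unfolding A_def by (rule notin_s_saturated_cylinder_flip_at[OF M(1) that])
  have k_flip: "k (flip_at (M + i) x) = flip_at (M + i) w" for i
    using M(2) by (simp add: k_eq w_def lift_perm_flip_at)
  define E where "E j = sym_diff (sym_diff (k -` A j) B) (A j)" for j
  have A: "clopen_set (A j)" "s -` A j = A j" for j
    unfolding A_def using M(1)
    by (simp_all add: clopen_set_s_saturated_cylinder vimage_s_saturated_cylinder)
  show ?thesis
  proof (rule infinite_fcls_family[where E = E])
    fix i j :: nat
    assume "i \<noteq> j"
    let ?u = "flip_at (M + i) x"
    have "?u \<notin> A i" "?u \<notin> A j"
      using x_out flip_at_in_cylinder[of M "M + i" x] by simp_all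
    moreover have "k ?u \<in> A i"
      by (simp add: k_flip A_def s_saturated_cylinder_def)
    moreover have "flip_at (M + i) w (M + j) = w (M + j)"
      using \<open>i \<noteq> j\<close> by (simp add: flip_at_def)
    then have "k ?u \<notin> A j"
      using w_out[of "flip_at (M + i) w" j] flip_at_in_cylinder[of M "M + i" w]
      by (simp add: k_flip)
    ultimately show "(?u \<in> E i) \<noteq> (?u \<in> E j)"
      by (simp add: E_def)
  next
    fix i j :: nat
    have "x \<notin> A i" "x \<notin> A j" "k x \<notin> A i" "k x \<notin> A j"
      using x_out[of x] w_out[of w] by (simp_all add: w_def[symmetric])
    then show "(x \<in> E i) = (x \<in> E j)"
      by (simp add: E_def)
  next
    fix j
    show "fcls (E j) \<in> {fcls (sym_diff (sym_diff (k -` A) B) A) | A. clopen_set A \<and> s -` A = A}"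
      unfolding E_def using A[of j] by (intro CollectI exI[of _ "A j"]) simp
  qed
qed

section \<open>Finite orbits under the centralizer of \<open>s\<close>\<close>

lemma mem_centralizer_iff:
  "(g, fcls A) \<in> centralizer Gsd (s, fcls {}) \<longleftrightarrow>
    g \<in> S2inf \<and> clopen_set A \<and> g \<circ> s = s \<circ> g \<and> fcls (s -` A) = fcls A"
  by (auto simp: centralizer_def carrier_Gsd_iff mult_Gsd)

lemma vimage_supp_commuting:
  assumes "g \<in> S2inf" "g \<circ> s = s \<circ> g"
  shows "g -` supp s = supp s"
proof -
  have "s (g x) = g (s x)" for x
    using fun_cong[OF assms(2), of x] by simp
  moreover have "inj g"
    using S2inf_inverse(1)[OF assms(1)] by (rule bij_is_inj)
  ultimately show ?thesis
    by (auto simp: supp_def inj_eq)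
qed

lemma conj_commuting_fixes:
  assumes g: "g \<in> S2inf" "g \<circ> s = s \<circ> g" and k: "k = id \<or> k = s"
  shows "Hilbert_Choice.inv g \<circ> k \<circ> g = k"
proof -
  have inv_g: "Hilbert_Choice.inv g \<circ> g = id"
    using S2inf_inverse(1)[OF g(1)] by (simp add: bij_is_inj)
  have "Hilbert_Choice.inv g \<circ> s \<circ> g = (Hilbert_Choice.inv g \<circ> g) \<circ> s"
    by (simp add: g(2) comp_assoc)
  with k inv_g show ?thesis
    by (elim disjE) simp_all
qed

lemma candidate_conj_eq:
  assumes k: "k = id \<or> k = s" and B: "B = {} \<or> B = supp s"
    and t: "t \<in> centralizer Gsd (s, fcls {})"
  shows "inv\<^bsub>Gsd\<^esub> t \<otimes>\<^bsub>Gsd\<^esub> (k, fcls B) \<otimes>\<^bsub>Gsd\<^esub> t = (k, fcls B)"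
proof -
  obtain g A where t_eq: "t = (g, fcls A)"
    using t by (auto simp: centralizer_def elim: carrier_GsdE)
  with t have g: "g \<in> S2inf" "g \<circ> s = s \<circ> g" and A: "clopen_set A" "fcls (s -` A) = fcls A"
    by (simp_all add: mem_centralizer_iff)
  have "g -` B = B"
    using B vimage_supp_commuting[OF g] by auto
  moreover have "fcls (k -` A) = fcls A"
    using k A(2) by (elim disjE) simp_all
  ultimately show ?thesis
    by (simp add: t_eq conj_Gsd[OF g(1) A(1)] conj_commuting_fixes[OF g k]
      fcls_sym_diff_twist[of k A])
qed

lemma candidates_subset_fpc:
  "{(id, fcls {}), (s, fcls {}), (id, fcls (supp s)), (s, fcls (supp s))} \<subseteq> fpc Gsd (s, fcls {})"
proof
  fix h
  assume "h \<in> {(id, fcls {}), (s, fcls {}), (id, fcls (supp s)), (s, fcls (supp s))}"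
  then obtain k B where h: "h = (k, fcls B)" and k: "k = id \<or> k = s" and B: "B = {} \<or> B = supp s"
    by blast
  have "h \<in> carrier Gsd"
    using k B by (auto simp: h carrier_Gsd_iff id_in_S2inf s_in_S2inf clopen_set_empty
      clopen_set_supp[OF s_in_S2inf])
  moreover have "{inv\<^bsub>Gsd\<^esub> t \<otimes>\<^bsub>Gsd\<^esub> h \<otimes>\<^bsub>Gsd\<^esub> t | t. t \<in> centralizer Gsd (s, fcls {})} \<subseteq> {h}"
    using candidate_conj_eq[OF k B] by (auto simp: h)
  then have "finite {inv\<^bsub>Gsd\<^esub> t \<otimes>\<^bsub>Gsd\<^esub> h \<otimes>\<^bsub>Gsd\<^esub> t | t. t \<in> centralizer Gsd (s, fcls {})}"
    by (rule finite_subset) simp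
  ultimately show "h \<in> fpc Gsd (s, fcls {})"
    by (simp add: fpc_def)
qed

lemma fpc_finite_twisted_classes:
  assumes "(k, fcls B) \<in> fpc Gsd (s, fcls {})"
  shows "finite {fcls (sym_diff (sym_diff (k -` A) B) A) | A. clopen_set A \<and> s -` A = A}"
proof -
  let ?I = "{A. clopen_set A \<and> s -` A = A}"
  let ?conj = "\<lambda>t. inv\<^bsub>Gsd\<^esub> t \<otimes>\<^bsub>Gsd\<^esub> (k, fcls B) \<otimes>\<^bsub>Gsd\<^esub> t"
  have "(\<lambda>A. (id, fcls A)) ` ?I \<subseteq> centralizer Gsd (s, fcls {})"
    by (auto simp: mem_centralizer_iff id_in_S2inf)
  then have "finite (snd ` ?conj ` (\<lambda>A. (id, fcls A)) ` ?I)"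
    by (intro finite_imageI finite_conjugates_fpc[OF assms])
  moreover have "snd ` ?conj ` (\<lambda>A. (id, fcls A)) ` ?I =
      (\<lambda>A. fcls (sym_diff (sym_diff (k -` A) B) A)) ` ?I"
    unfolding image_image by (rule image_cong) (simp_all add: conj_Gsd[OF id_in_S2inf])
  ultimately show ?thesis
    by (simp add: setcompr_eq_image)
qed

lemma fpc_finite_vimage_classes:
  assumes "(k, fcls B) \<in> fpc Gsd (s, fcls {})"
  shows "finite {fcls (g -` B) | g. g \<in> S2inf \<and> g \<circ> s = s \<circ> g}"
    and "finite {fcls (g -` supp k) | g. g \<in> S2inf \<and> g \<circ> s = s \<circ> g}"
proof -
  let ?C = "{g. g \<in> S2inf \<and> g \<circ> s = s \<circ> g}"
  let ?conj = "\<lambda>t. inv\<^bsub>Gsd\<^esub> t \<otimes>\<^bsub>Gsd\<^esub> (k, fcls B) \<otimes>\<^bsub>Gsd\<^esub> t"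
  have "(\<lambda>g. (g, fcls {})) ` ?C \<subseteq> centralizer Gsd (s, fcls {})"
    by (auto simp: mem_centralizer_iff clopen_set_empty)
  then have "finite (?conj ` (\<lambda>g. (g, fcls {})) ` ?C)"
    by (rule finite_conjugates_fpc[OF assms])
  moreover have "?conj ` (\<lambda>g. (g, fcls {})) ` ?C =
      (\<lambda>g. (Hilbert_Choice.inv g \<circ> k \<circ> g, fcls (g -` B))) ` ?C"
    unfolding image_image by (rule image_cong) (simp_all add: conj_Gsd clopen_set_empty)
  ultimately have conjugates: "finite ((\<lambda>g. (Hilbert_Choice.inv g \<circ> k \<circ> g, fcls (g -` B))) ` ?C)"
    by simp
  show "finite {fcls (g -` B) | g. g \<in> S2inf \<and> g \<circ> s = s \<circ> g}"
    using finite_imageI[OF conjugates, of snd] by (simp add: setcompr_eq_image image_image)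
  have "(\<lambda>g. fcls (supp (Hilbert_Choice.inv g \<circ> k \<circ> g))) ` ?C = (\<lambda>g. fcls (g -` supp k)) ` ?C"
    by (rule image_cong) (simp_all add: supp_conj S2inf_inverse(1))
  then show "finite {fcls (g -` supp k) | g. g \<in> S2inf \<and> g \<circ> s = s \<circ> g}"
    using finite_imageI[OF conjugates, of "\<lambda>p. fcls (supp (fst p))"]
    by (simp add: setcompr_eq_image image_image)
qed

lemma fpc_moves_within_s_orbits:
  assumes h: "(k, fcls B) \<in> fpc Gsd (s, fcls {})"
  shows "k x = x \<or> k x = s x"
proof (rule ccontr)
  assume "\<not> (k x = x \<or> k x = s x)"
  then have "infinite {fcls (sym_diff (sym_diff (k -` A) B) A) | A. clopen_set A \<and> s -` A = A}"
    using infinite_twisted_classes fpc_Gsd_carrier[OF h] by blast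
  then show False
    using fpc_finite_twisted_classes[OF h] by contradiction
qed

lemma fpc_supp_component:
  assumes h: "(k, fcls B) \<in> fpc Gsd (s, fcls {})"
  shows "supp k \<in> {{}, UNIV, supp s, - supp s}"
proof (rule ccontr)
  have k: "k \<in> S2inf"
    using fpc_Gsd_carrier[OF h] by simp
  assume "supp k \<notin> {{}, UNIV, supp s, - supp s}"
  then have "infinite {fcls (g -` supp k) | g. g \<in> S2inf \<and> g \<circ> s = s \<circ> g}"
    by (rule infinite_vimage_classes[OF clopen_set_supp[OF k]])
  then show False
    using fpc_finite_vimage_classes(2)[OF h] by contradiction
qed

lemma fpc_class_component:
  assumes h: "(k, fcls B) \<in> fpc Gsd (s, fcls {})"
  shows "B \<in> {{}, UNIV, supp s, - supp s}"
proof (rule ccontr)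
  have B: "clopen_set B"
    using fpc_Gsd_carrier[OF h] by simp
  assume "B \<notin> {{}, UNIV, supp s, - supp s}"
  then have "infinite {fcls (g -` B) | g. g \<in> S2inf \<and> g \<circ> s = s \<circ> g}"
    by (rule infinite_vimage_classes[OF B])
  then show False
    using fpc_finite_vimage_classes(1)[OF h] by contradiction
qed

lemma fpc_perm_component:
  assumes h: "(k, fcls B) \<in> fpc Gsd (s, fcls {})"
  shows "k = id \<or> k = s"
proof -
  note within = fpc_moves_within_s_orbits[OF h]
  have supp_sub: "supp k \<subseteq> supp s"
  proof
    fix x
    assume "x \<in> supp k"
    then show "x \<in> supp s"
      using within[of x] by (auto simp: supp_def)
  qed
  consider "supp k = {}" | "supp k = UNIV" | "supp k = supp s" | "supp k = - supp s"
    using fpc_supp_component[OF h] by blast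
  then have "supp k = {} \<or> supp k = supp s"
  proof cases
    case 2
    with supp_sub show ?thesis
      by (simp add: top.extremum_unique)
  next
    case 4
    with supp_sub show ?thesis
      by blast
  qed simp_all
  then show ?thesis
  proof
    assume "supp k = {}"
    then show ?thesis
      by (auto simp: supp_def fun_eq_iff)
  next
    assume "supp k = supp s"
    then have "k x = s x" for x
      using within[of x] by (auto simp: supp_def set_eq_iff)
    then show ?thesis
      by (auto simp: fun_eq_iff)
  qed
qed

end

theorem proposition3p4:
  assumes "s \<in> S2inf" and "s \<circ> s = id" and "s \<noteq> id"
  shows "fpc Gsd (s, fcls {}) =
           {(id, fcls {}), (s, fcls {}), (id, fcls (supp s)), (s, fcls (supp s))}"
proof -
  obtain n \<sigma> where s_eq: "s = lift_perm n \<sigma>" and \<sigma>: "\<sigma> permutes {xs. length xs = n}"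
    using assms(1) unfolding S2inf_def by blast
  interpret S2inf_involution s n \<sigma>
    by (rule S2inf_involution.intro[OF s_eq \<sigma> assms(2)])
  show ?thesis
  proof (rule equalityI)
    show "fpc Gsd (s, fcls {}) \<subseteq>
        {(id, fcls {}), (s, fcls {}), (id, fcls (supp s)), (s, fcls (supp s))}"
    proof
      fix h
      assume h: "h \<in> fpc Gsd (s, fcls {})"
      then obtain k B where h_eq: "h = (k, fcls B)"
        by (auto simp: fpc_def elim: carrier_GsdE)
      have "k = id \<or> k = s"
        using fpc_perm_component h by (simp add: h_eq)
      moreover have "fcls B = fcls {} \<or> fcls B = fcls (supp s)"
        using fpc_class_component h by (auto simp: h_eq fcls_eq_iff)
      ultimately show "h \<in> {(id, fcls {}), (s, fcls {}), (id, fcls (supp s)), (s, fcls (supp s))}"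
        by (auto simp: h_eq)
    qed
  qed (rule candidates_subset_fpc)
qed

end
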